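(* Consider the online multiple testing protocol described in the context, and a deterministic online testing algorithm with worst-case threshold sequence $(\tilde\lambda_t)_{t\ge1}$ satisfying $\sum_{t=1}^\infty\tilde\lambda_t\le C<1$. Assume $G(x)\le Lx$ for all $x\in[0,1]$ for some constant $L\ge1$. For an even integer $T\ge2$, let the environment be the deterministic two-phase sequence $Y_t=0$ for $1\le t\le T/2$ and $Y_t=1$ for $T/2<t\le T$. Then for all sufficiently large $T$ and all $a,b>0$, $$\mathbb{E}[\mathrm{Regret}_T(a,b)]\ \ge\ b\cdot\frac T2\left[(1-C)\prod_{t=T/2+1}^{\infty}\big(1-L\tilde\lambda_t\big)_+\right]=\Omega(T),$$ where $(x)_+=\max(x,0)$.
   Context: Online multiple testing protocol: at each round $t$ the environment has a true state $Y_t\in\{0,1\}$ and reveals a $p$-value $p_t\in[0,1]$; conditionally on the states and the past, $p_t\sim\mathrm{Uniform}[0,1]$ if $Y_t=0$ and $p_t\sim G$ if $Y_t=1$, independently across rounds, where $G$ is a continuous strictly increasing CDF on $[0,1]$ with $G(0)=0$, $G(1)=1$. The algorithm picks a threshold $\lambda_t\in[0,1]$ that is a deterministic function of the past history $(p_s,\lambda_s,\delta_s)_{s\le t-1}$ and decides $\delta_t=\mathbf{1}\{p_t\le\lambda_t\}$. The worst-case threshold sequence $\tilde\lambda_t$ is the threshold the algorithm uses at round $t$ when exactly zero rejections have occurred in rounds $1,\dots,t-1$ (so as long as no rejection has been made, $\lambda_t=\tilde\lambda_t$). $V_T=\sum_{t\le T}\mathbf{1}\{Y_t=0,\delta_t=1\}$,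 $M_T=\sum_{t\le T}\mathbf{1}\{Y_t=1,\delta_t=0\}$, and for $a,b>0$, $\mathrm{Regret}_T(a,b)=aV_T+bM_T$. *)

theory Defs
  imports "HOL-Probability.Probability"
begin

text \<open>A history entry of round s is (p_s, lambda_s, delta_s). A deterministic online
testing algorithm is a map from the past history (rounds 1..t-1, oldest first) to the
threshold lambda_t.\<close>

type_synonym history = "(real \<times> real \<times> bool) list"

fun hist :: "(history \<Rightarrow> real) \<Rightarrow> (nat \<Rightarrow> real) \<Rightarrow> nat \<Rightarrow> history" where
  "hist A p 0 = []"
| "hist A p (Suc n) =
     (let h = hist A p n; l = A h in h @ [(p (Suc n), l, p (Suc n) \<le> l)])"

definition thr :: "(history \<Rightarrow> real) \<Rightarrow> (nat \<Rightarrow> real) \<Rightarrow> nat \<Rightarrow> real" where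
  "thr A p t = A (hist A p (t - 1))"

definition rej :: "(history \<Rightarrow> real) \<Rightarrow> (nat \<Rightarrow> real) \<Rightarrow> nat \<Rightarrow> bool" where
  "rej A p t = (p t \<le> thr A p t)"

definition V :: "(history \<Rightarrow> real) \<Rightarrow> (nat \<Rightarrow> bool) \<Rightarrow> nat \<Rightarrow> (nat \<Rightarrow> real) \<Rightarrow> nat" where
  "V A Y T p = card {t \<in> {1..T}. \<not> Y t \<and> rej A p t}"

definition M :: "(history \<Rightarrow> real) \<Rightarrow> (nat \<Rightarrow> bool) \<Rightarrow> nat \<Rightarrow> (nat \<Rightarrow> real) \<Rightarrow> nat" where
  "M A Y T p = card {t \<in> {1..T}. Y t \<and> \<not> rej A p t}"

definition regret :: "real \<Rightarrow> real \<Rightarrow> (history \<Rightarrow> real) \<Rightarrow> (nat \<Rightarrow> bool) \<Rightarrow> nat \<Rightarrow> (nat \<Rightarrow> real) \<Rightarrow> real" where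
  "regret a b A Y T p = a * real (V A Y T p) + b * real (M A Y T p)"

definition alt_dist :: "(real \<Rightarrow> real) \<Rightarrow> real measure" where
  "alt_dist G = interval_measure (\<lambda>x. G (min 1 (max 0 x)))"

definition pdist :: "(real \<Rightarrow> real) \<Rightarrow> bool \<Rightarrow> real measure" where
  "pdist G y = (if y then alt_dist G else uniform_measure lborel {0..1})"

definition pspace :: "(real \<Rightarrow> real) \<Rightarrow> (nat \<Rightarrow> bool) \<Rightarrow> nat \<Rightarrow> (nat \<Rightarrow> real) measure" where
  "pspace G Y T = PiM {1..T} (\<lambda>t. pdist G (Y t))"

definition exp_regret :: "real \<Rightarrow> real \<Rightarrow> (history \<Rightarrow> real) \<Rightarrow> (real \<Rightarrow> real) \<Rightarrow> (nat \<Rightarrow> bool) \<Rightarrow> nat \<Rightarrow> ennreal" where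
  "exp_regret a b A G Y T = (\<integral>\<^sup>+ p. ennreal (regret a b A Y T p) \<partial>pspace G Y T)"

definition two_phase :: "nat \<Rightarrow> nat \<Rightarrow> bool" where
  "two_phase T t = (T div 2 < t)"

end

theory Submission
  imports Defs
begin

text \<open>On the event that every p-value exceeds its worst-case threshold the algorithm
never rejects, so it stays on the worst-case sequence and misses all T/2 alternatives,
at cost b T/2. By independence this event has probability
prod_{t <= T/2} (1 - lt t) * prod_{T/2 < t <= T} (1 - G (lt t)). The first product is at
least 1 - C by the Weierstrass product inequality; the second is at least the tail
product of (1 - L lt t)_+, which converges to a value at least 1/2 as soon as the tail
sum of L lt is at most 1/2.\<close>

lemma worst_case_thr_bounds:
  assumes A_range: "\<And>h. 0 \<le> A h \<and> A h \<le> 1"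
    and worst_case: "\<And>p n. (\<forall>s\<in>{1..n}. \<not> rej A p s) \<Longrightarrow> thr A p (n + 1) = lt (n + 1)"
    and "1 \<le> t"
  shows "0 \<le> lt t \<and> lt t \<le> 1"
proof -
  \<comment> \<open>p-values equal to 2 are never rejected, so they reveal the worst-case thresholds.\<close>
  let ?p = "\<lambda>_::nat. 2::real"
  have "A h < 2" for h
    using A_range[of h] by linarith
  then have "\<forall>s\<in>{1..t - 1}. \<not> rej A ?p s"
    by (simp add: rej_def thr_def not_le)
  then have "thr A ?p (t - 1 + 1) = lt (t - 1 + 1)"
    by (rule worst_case)
  then show ?thesis
    using A_range[of "hist A ?p (t - 1)"] \<open>1 \<le> t\<close> by (simp add: thr_def)
qed

lemma no_rej_above_worst_case:
  assumes worst_case: "\<And>p n. (\<forall>s\<in>{1..n}. \<not> rej A p s) \<Longrightarrow> thr A p (n + 1) = lt (n + 1)"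
    and above: "\<And>t. t \<in> {1..T} \<Longrightarrow> lt t < p t"
  shows "\<forall>s\<in>{1..T}. \<not> rej A p s"
proof -
  have "\<forall>s\<in>{1..n}. \<not> rej A p s" if "n \<le> T" for n
    using that
  proof (induction n)
    case 0
    then show ?case by simp
  next
    case (Suc n)
    then have no_rej: "\<forall>s\<in>{1..n}. \<not> rej A p s"
      by simp
    have "\<not> rej A p (Suc n)"
      using worst_case[OF no_rej] above[of "Suc n"] Suc.prems by (simp add: rej_def)
    with no_rej show ?case
      by (auto simp: le_Suc_eq)
  qed
  then show ?thesis by blast
qed

lemma mono_clamp:
  fixes G :: "real \<Rightarrow> real"
  assumes "mono_on {0..1} G" and "x \<le> y"
  shows "G (min 1 (max 0 x)) \<le> G (min 1 (max 0 y))"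
  by (rule mono_onD[OF assms(1)]) (use assms(2) in auto)

lemma continuous_at_right_clamp:
  fixes G :: "real \<Rightarrow> real"
  assumes "continuous_on {0..1} G"
  shows "continuous (at_right a) (\<lambda>x. G (min 1 (max 0 x)))"
proof -
  have "continuous_on UNIV (\<lambda>x. G (min 1 (max 0 x)))"
    by (rule continuous_on_compose2[OF assms]) (auto intro!: continuous_intros)
  then show ?thesis
    by (simp add: continuous_at_imp_continuous_at_within continuous_on_eq_continuous_at)
qed

lemma sets_pdist [simp]: "sets (pdist G y) = sets borel"
  unfolding pdist_def alt_dist_def by auto

lemma sigma_finite_pdist:
  assumes "mono_on {0..1} G" and "continuous_on {0..1} G"
  shows "sigma_finite_measure (pdist G y)"
proof (cases y)
  case True
  then show ?thesis
    using sigma_finite_interval_measure[OF mono_clamp[OF assms(1)] continuous_at_right_clamp[OF assms(2)]]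
    by (simp add: pdist_def alt_dist_def)
next
  case False
  have "prob_space (uniform_measure lborel {0..1::real})"
    by (intro prob_space_uniform_measure) auto
  with False show ?thesis
    by (simp add: pdist_def prob_space_imp_sigma_finite)
qed

lemma emeasure_uniform_greaterThan:
  fixes x :: real
  assumes "0 \<le> x" and "x \<le> 1"
  shows "emeasure (uniform_measure lborel {0..1}) {x<..} = ennreal (1 - x)"
proof -
  have "{0..1} \<inter> {x<..} = {x<..1}"
    using assms by auto
  then show ?thesis
    using assms by (simp add: divide_ennreal_def)
qed

lemma emeasure_alt_dist_greaterThan_ge:
  assumes "mono_on {0..1} G" and "continuous_on {0..1} G" and "G 1 = 1"
    and "0 \<le> x" and "x \<le> 1"
  shows "ennreal (1 - G x) \<le> emeasure (alt_dist G) {x<..}"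
proof -
  have "emeasure (alt_dist G) {x<..1} = ennreal (1 - G x)"
    using emeasure_interval_measure_Ioc[OF \<open>x \<le> 1\<close> mono_clamp[OF assms(1)]
        continuous_at_right_clamp[OF assms(2)]] assms(3-5)
    by (simp add: alt_dist_def)
  moreover have "emeasure (alt_dist G) {x<..1} \<le> emeasure (alt_dist G) {x<..}"
    by (rule emeasure_mono) (auto simp: alt_dist_def)
  ultimately show ?thesis by simp
qed

lemma emeasure_pdist_greaterThan_ge:
  assumes G_mono: "mono_on {0..1} G" and G_cont: "continuous_on {0..1} G" and G1: "G 1 = 1"
    and G_lin: "\<And>x. x \<in> {0..1} \<Longrightarrow> G x \<le> L * x"
    and x: "0 \<le> x" "x \<le> 1"
  shows "ennreal (if y then max 0 (1 - L * x) else 1 - x) \<le> emeasure (pdist G y) {x<..}"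
proof (cases y)
  case True
  have "ennreal (max 0 (1 - L * x)) \<le> ennreal (1 - G x)"
    using G_lin[of x] x by (auto simp: ennreal_max_0 intro: ennreal_leI)
  also have "\<dots> \<le> emeasure (alt_dist G) {x<..}"
    by (rule emeasure_alt_dist_greaterThan_ge[OF G_mono G_cont G1 x])
  finally show ?thesis
    using True by (simp add: pdist_def)
next
  case False
  then show ?thesis
    using emeasure_uniform_greaterThan[OF x] by (simp add: pdist_def)
qed

lemma exp_regret_ge_prob_above_worst_case:
  fixes a b :: real
  assumes worst_case: "\<And>p n. (\<forall>s\<in>{1..n}. \<not> rej A p s) \<Longrightarrow> thr A p (n + 1) = lt (n + 1)"
    and "mono_on {0..1} G" and "continuous_on {0..1} G" and "0 \<le> a" and "0 \<le> b"
  shows "ennreal (b * card {t \<in> {1..T}. Y t}) * (\<Prod>t\<in>{1..T}. emeasure (pdist G (Y t)) {lt t<..})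
           \<le> exp_regret a b A G Y T"
proof -
  define E where "E = PiE {1..T} (\<lambda>t. {lt t<..})"
  interpret product_sigma_finite "\<lambda>t. pdist G (Y t)"
    using sigma_finite_pdist[OF assms(2,3)] by (simp add: product_sigma_finite_def)
  have E_sets: "E \<in> sets (pspace G Y T)"
    unfolding E_def pspace_def by (rule sets_PiM_I_finite) auto
  have prob_E: "emeasure (pspace G Y T) E = (\<Prod>t\<in>{1..T}. emeasure (pdist G (Y t)) {lt t<..})"
    unfolding pspace_def E_def by (rule emeasure_PiM) auto
  have regret_ge: "ennreal (b * card {t \<in> {1..T}. Y t}) * indicator E p \<le> ennreal (regret a b A Y T p)" for p
  proof (cases "p \<in> E")
    case True
    then have "\<forall>s\<in>{1..T}. \<not> rej A p s"
      using no_rej_above_worst_case[OF worst_case, of T p] by (auto simp: E_def PiE_iff)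
    then have "{t \<in> {1..T}. Y t \<and> \<not> rej A p t} = {t \<in> {1..T}. Y t}"
      by auto
    moreover have "0 \<le> a * real (V A Y T p)"
      using \<open>0 \<le> a\<close> by simp
    ultimately have "b * card {t \<in> {1..T}. Y t} \<le> regret a b A Y T p"
      by (simp add: regret_def M_def)
    with True show ?thesis
      by (simp add: ennreal_leI)
  qed simp
  have "ennreal (b * card {t \<in> {1..T}. Y t}) * emeasure (pspace G Y T) E
      = (\<integral>\<^sup>+ p. ennreal (b * card {t \<in> {1..T}. Y t}) * indicator E p \<partial>pspace G Y T)"
    by (rule nn_integral_cmult_indicator[OF E_sets, symmetric])
  also have "\<dots> \<le> exp_regret a b A G Y T"
    unfolding exp_regret_def by (intro nn_integral_mono regret_ge)
  finally show ?thesis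
    by (simp add: prob_E)
qed

lemma prod_emeasure_two_phase_ge:
  assumes lt01: "\<And>t. 1 \<le> t \<Longrightarrow> 0 \<le> lt t \<and> lt t \<le> 1"
    and G_mono: "mono_on {0..1} G" and G_cont: "continuous_on {0..1} G" and G1: "G 1 = 1"
    and G_lin: "\<And>x. x \<in> {0..1} \<Longrightarrow> G x \<le> L * x"
  shows "ennreal ((\<Prod>t\<in>{1..m}. 1 - lt t) * (\<Prod>t\<in>{m<..2*m}. max 0 (1 - L * lt t)))
           \<le> (\<Prod>t\<in>{1..2*m}. emeasure (pdist G (two_phase (2*m) t)) {lt t<..})"
proof -
  define f where "f t = (if two_phase (2*m) t then max 0 (1 - L * lt t) else 1 - lt t)" for t
  have f_nonneg: "0 \<le> f t" if "t \<in> {1..2*m}" for t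
    using lt01[of t] that by (simp add: f_def)
  have "(\<Prod>t\<in>{1..2*m}. f t) = (\<Prod>t\<in>{1..m}. f t) * (\<Prod>t\<in>{m<..2*m}. f t)"
    by (subst prod.union_disjoint[symmetric]) (auto intro: prod.cong)
  moreover have "(\<Prod>t\<in>{1..m}. f t) = (\<Prod>t\<in>{1..m}. 1 - lt t)"
    by (rule prod.cong) (auto simp: f_def two_phase_def)
  moreover have "(\<Prod>t\<in>{m<..2*m}. f t) = (\<Prod>t\<in>{m<..2*m}. max 0 (1 - L * lt t))"
    by (rule prod.cong) (auto simp: f_def two_phase_def)
  ultimately have "(\<Prod>t\<in>{1..m}. 1 - lt t) * (\<Prod>t\<in>{m<..2*m}. max 0 (1 - L * lt t)) = (\<Prod>t\<in>{1..2*m}. f t)"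
    by simp
  then have "ennreal ((\<Prod>t\<in>{1..m}. 1 - lt t) * (\<Prod>t\<in>{m<..2*m}. max 0 (1 - L * lt t)))
      = (\<Prod>t\<in>{1..2*m}. ennreal (f t))"
    using f_nonneg by (metis prod_ennreal)
  also have "\<dots> \<le> (\<Prod>t\<in>{1..2*m}. emeasure (pdist G (two_phase (2*m) t)) {lt t<..})"
    using lt01 unfolding f_def
    by (intro prod_mono_ennreal emeasure_pdist_greaterThan_ge[OF G_mono G_cont G1 G_lin]) auto
  finally show ?thesis .
qed

lemma exp_regret_two_phase_ge:
  fixes a b :: real
  assumes worst_case: "\<And>p n. (\<forall>s\<in>{1..n}. \<not> rej A p s) \<Longrightarrow> thr A p (n + 1) = lt (n + 1)"
    and lt01: "\<And>t. 1 \<le> t \<Longrightarrow> 0 \<le> lt t \<and> lt t \<le> 1"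
    and G_mono: "mono_on {0..1} G" and G_cont: "continuous_on {0..1} G" and G1: "G 1 = 1"
    and G_lin: "\<And>x. x \<in> {0..1} \<Longrightarrow> G x \<le> L * x"
    and "0 \<le> a" and "0 \<le> b"
    and null: "0 \<le> c" "c \<le> (\<Prod>t\<in>{1..m}. 1 - lt t)"
    and alt: "0 \<le> d" "d \<le> (\<Prod>t\<in>{m<..2*m}. max 0 (1 - L * lt t))"
  shows "ennreal (b * m * (c * d)) \<le> exp_regret a b A G (two_phase (2*m)) (2*m)"
proof -
  have "{t \<in> {1..2*m}. two_phase (2*m) t} = {m<..2*m}"
    by (auto simp: two_phase_def)
  then have card_alt: "card {t \<in> {1..2*m}. two_phase (2*m) t} = m"
    by simp
  have "c * d \<le> (\<Prod>t\<in>{1..m}. 1 - lt t) * (\<Prod>t\<in>{m<..2*m}. max 0 (1 - L * lt t))"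
    using null alt by (intro mult_mono) auto
  then have "ennreal (b * m * (c * d))
      \<le> ennreal (b * m * ((\<Prod>t\<in>{1..m}. 1 - lt t) * (\<Prod>t\<in>{m<..2*m}. max 0 (1 - L * lt t))))"
    using \<open>0 \<le> b\<close> by (intro ennreal_leI mult_left_mono) auto
  also have "\<dots> = ennreal (b * m) * ennreal ((\<Prod>t\<in>{1..m}. 1 - lt t) * (\<Prod>t\<in>{m<..2*m}. max 0 (1 - L * lt t)))"
    using \<open>0 \<le> b\<close> null alt by (intro ennreal_mult) (auto intro: mult_nonneg_nonneg order_trans)
  also have "\<dots> \<le> ennreal (b * m) * (\<Prod>t\<in>{1..2*m}. emeasure (pdist G (two_phase (2*m) t)) {lt t<..})"
    by (intro mult_left_mono prod_emeasure_two_phase_ge[OF lt01 G_mono G_cont G1 G_lin]) auto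
  also have "\<dots> \<le> exp_regret a b A G (two_phase (2*m)) (2*m)"
    using exp_regret_ge_prob_above_worst_case[OF worst_case G_mono G_cont \<open>0 \<le> a\<close> \<open>0 \<le> b\<close>,
        of "2*m" "two_phase (2*m)", unfolded card_alt] .
  finally show ?thesis .
qed

lemma prod_one_minus_ge_one_minus_suminf:
  fixes x :: "nat \<Rightarrow> real"
  assumes "\<And>k. 0 \<le> x k \<and> x k \<le> 1" and "summable x"
  shows "1 - suminf x \<le> (\<Prod>k<n. 1 - x k)"
proof -
  have "sum x {..<n} \<le> suminf x"
    using assms by (intro sum_le_suminf) auto
  moreover have "1 - sum x {..<n} \<le> (\<Prod>k<n. 1 - x k)"
    using assms by (intro Weierstrass_prod_ineq) auto
  ultimately show ?thesis by linarith
qed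

lemma prodinf_max_one_minus_bounds:
  fixes x :: "nat \<Rightarrow> real"
  assumes nonneg: "\<And>k. 0 \<le> x k" and summable: "summable x" and small: "suminf x \<le> 1/2"
  shows "1/2 \<le> (\<Prod>k. max 0 (1 - x k))" and "(\<Prod>k. max 0 (1 - x k)) \<le> (\<Prod>k<n. max 0 (1 - x k))"
proof -
  have "x k \<le> suminf x" for k
    using sum_le_suminf[OF summable, of "{k}"] nonneg by simp
  then have x_le: "x k \<le> 1/2" for k
    using small order_trans by blast
  have max_eq: "max 0 (1 - x k) = 1 - x k" for k
    using x_le[of k] by (simp add: max_absorb2)
  have "- x k \<noteq> -1" for k
    using x_le[of k] by simp
  with nonneg summable have "convergent_prod (\<lambda>k. 1 + - x k)"
    by (intro summable_imp_convergent_prod_real) auto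
  then have has_prod: "(\<lambda>k. 1 - x k) has_prod (\<Prod>k. 1 - x k)"
    by (simp add: convergent_prod_has_prod)
  have x_le_1: "x k \<le> 1" for k
    using x_le[of k] by simp
  then have partial: "1/2 \<le> (\<Prod>k<n. 1 - x k)" for n
    using prod_one_minus_ge_one_minus_suminf[of x n] nonneg summable small by force
  have "1/2 \<le> (\<Prod>k. 1 - x k)"
    by (rule LIMSEQ_le_const[OF has_prod_imp_tendsto'[OF has_prod]]) (use partial in blast)
  moreover have "(\<Prod>k. 1 - x k) \<le> (\<Prod>k<n. 1 - x k)"
    using nonneg x_le_1 by (intro prod_ge_prodinf[OF has_prod]) auto
  ultimately show "1/2 \<le> (\<Prod>k. max 0 (1 - x k))" and "(\<Prod>k. max 0 (1 - x k)) \<le> (\<Prod>k<n. max 0 (1 - x k))"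
    by (simp_all add: max_eq)
qed

lemma eventually_tail_prodinf_bounds:
  fixes lt :: "nat \<Rightarrow> real"
  assumes lt_nonneg: "\<And>t. 1 \<le> t \<Longrightarrow> 0 \<le> lt t" and "summable (\<lambda>t. lt (Suc t))" and "0 \<le> L"
  obtains N where "\<And>m. N \<le> m \<Longrightarrow> 1/2 \<le> (\<Prod>k. max 0 (1 - L * lt (k + m + 1)))"
    and "\<And>m. N \<le> m \<Longrightarrow> (\<Prod>k. max 0 (1 - L * lt (k + m + 1))) \<le> (\<Prod>t\<in>{m<..2*m}. max 0 (1 - L * lt t))"
proof -
  have summable_L: "summable (\<lambda>t. L * lt (Suc t))"
    using assms(2) by (rule summable_mult)
  then obtain N where N: "\<forall>m\<ge>N. norm (\<Sum>k. L * lt (Suc (k + m))) < 1/2"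
    using suminf_exist_split[of "1/2" "\<lambda>t. L * lt (Suc t)"] by auto
  have tail: "(\<Sum>k. L * lt (k + m + 1)) \<le> 1/2" if "N \<le> m" for m
    using N that abs_ge_self[of "\<Sum>k. L * lt (Suc (k + m))"] by fastforce
  have tail_summable: "summable (\<lambda>k. L * lt (k + m + 1))" for m
    using summable_L summable_iff_shift[of "\<lambda>t. L * lt (Suc t)" m] by simp
  have tail_nonneg: "0 \<le> L * lt (k + m + 1)" for k m
    using lt_nonneg[of "k + m + 1"] \<open>0 \<le> L\<close> by simp
  have reindex: "(\<Prod>t\<in>{m<..2*m}. max 0 (1 - L * lt t)) = (\<Prod>k<m. max 0 (1 - L * lt (k + m + 1)))" for m
    by (rule prod.reindex_bij_witness[of _ "\<lambda>k. k + m + 1" "\<lambda>t. t - m - 1"]) auto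
  show ?thesis
  proof (rule that)
    fix m assume "N \<le> m"
    note bounds = prodinf_max_one_minus_bounds[of "\<lambda>k. L * lt (k + m + 1)",
        OF tail_nonneg tail_summable tail[OF \<open>N \<le> m\<close>]]
    show "1/2 \<le> (\<Prod>k. max 0 (1 - L * lt (k + m + 1)))"
      using bounds(1) .
    show "(\<Prod>k. max 0 (1 - L * lt (k + m + 1))) \<le> (\<Prod>t\<in>{m<..2*m}. max 0 (1 - L * lt t))"
      using bounds(2)[of m] by (simp only: reindex)
  qed
qed

theorem theorem2:
  fixes A :: "history \<Rightarrow> real" and lt :: "nat \<Rightarrow> real"
    and G :: "real \<Rightarrow> real" and C L :: real
  assumes A_range: "\<And>h. 0 \<le> A h \<and> A h \<le> 1"
    and worst_case: "\<And>p n. (\<forall>s\<in>{1..n}. \<not> rej A p s) \<Longrightarrow> thr A p (n + 1) = lt (n + 1)"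
    and lt_summable: "summable (\<lambda>t. lt (Suc t))"
    and lt_sum: "(\<Sum>t. lt (Suc t)) \<le> C" and C_lt1: "C < 1"
    and G_cont: "continuous_on {0..1} G" and G_strict: "strict_mono_on {0..1} G"
    and G0: "G 0 = 0" and G1: "G 1 = 1"
    and G_lin: "\<And>x. x \<in> {0..1} \<Longrightarrow> G x \<le> L * x" and L_ge1: "L \<ge> 1"
  shows "\<exists>c>0. \<exists>T0. \<forall>T\<ge>T0. even T \<and> T \<ge> 2 \<longrightarrow>
           (1 - C) * (\<Prod>t. max 0 (1 - L * lt (t + T div 2 + 1))) \<ge> c \<and>
           (\<forall>a>0. \<forall>b>0.
              exp_regret a b A G (two_phase T) T \<ge>
              ennreal (b * (real T / 2) *
                ((1 - C) * (\<Prod>t. max 0 (1 - L * lt (t + T div 2 + 1))))))"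
proof -
  have lt01: "\<And>t. 1 \<le> t \<Longrightarrow> 0 \<le> lt t \<and> lt t \<le> 1"
    using worst_case_thr_bounds[OF A_range worst_case] by blast
  have G_mono: "mono_on {0..1} G"
    using G_strict by (rule strict_mono_on_imp_mono_on)
  obtain N where tail_lower: "\<And>m. N \<le> m \<Longrightarrow> 1/2 \<le> (\<Prod>k. max 0 (1 - L * lt (k + m + 1)))"
    and tail_upper: "\<And>m. N \<le> m \<Longrightarrow>
      (\<Prod>k. max 0 (1 - L * lt (k + m + 1))) \<le> (\<Prod>t\<in>{m<..2*m}. max 0 (1 - L * lt t))"
    using eventually_tail_prodinf_bounds[of lt L] lt01 lt_summable L_ge1 by auto
  have null: "1 - C \<le> (\<Prod>t\<in>{1..m}. 1 - lt t)" for m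
    using prod_one_minus_ge_one_minus_suminf[of "\<lambda>k. lt (Suc k)" m] lt01 lt_summable lt_sum
    by (force simp: prod.atLeast1_atMost_eq)
  have C_pos: "0 < 1 - C"
    using C_lt1 by simp
  have bound: "(1 - C) / 2 \<le> (1 - C) * (\<Prod>t. max 0 (1 - L * lt (t + T div 2 + 1))) \<and>
      (\<forall>a>0. \<forall>b>0. ennreal (b * (real T / 2) * ((1 - C) * (\<Prod>t. max 0 (1 - L * lt (t + T div 2 + 1)))))
         \<le> exp_regret a b A G (two_phase T) T)" if "even T" and "2 * N \<le> T" for T
  proof -
    obtain m where T: "T = 2 * m"
      using \<open>even T\<close> by blast
    with \<open>2 * N \<le> T\<close> have "N \<le> m"
      by simp
    note tail = tail_lower[OF this] tail_upper[OF this]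
    have "(1 - C) / 2 \<le> (1 - C) * (\<Prod>k. max 0 (1 - L * lt (k + m + 1)))"
      using mult_left_mono[OF tail(1), of "1 - C"] C_pos by simp
    moreover have "ennreal (b * m * ((1 - C) * (\<Prod>k. max 0 (1 - L * lt (k + m + 1)))))
        \<le> exp_regret a b A G (two_phase (2*m)) (2*m)" if "0 < a" and "0 < b" for a b :: real
      using that C_pos null[of m] tail
      by (intro exp_regret_two_phase_ge[OF worst_case lt01 G_mono G_cont G1 G_lin]) auto
    ultimately show ?thesis
      unfolding T by simp
  qed
  have "0 < (1 - C) / 2"
    using C_pos by simp
  with bound show ?thesis
    by blast
qed

end
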